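(* Consider a run of Algorithm 3 (described in the context) under the Standing Assumption and Matrix Assumption of the context, and let $g_{\max}>0$. If the stochastic gradient estimates satisfy $\|\bar g_k-g_k\|_2\le g_{\max}$ for all $k\in\mathbb{N}$, then the sequence $\{\bar u_k\}$ is bounded, and there exist $\bar k_\tau\in\mathbb{N}$ and $\bar\tau_{\min}>0$ such that $\bar\tau_k=\bar\tau_{\min}$ for all $k\ge\bar k_\tau$.
   Context: Problem: $\min_x f(x)$ s.t. $c(x)=0$, $f(x)=\mathbb{E}[F(x,\omega)]$, $c:\mathbb{R}^n\to\mathbb{R}^m$ deterministic. Notation: $g_k=\nabla f(x_k)$, $c_k=c(x_k)$, $J_k=\nabla c(x_k)^T$; $\Delta q(x,\tau,g,H,d)=-\tau(g^Td+\frac12\max\{d^THd,0\})+\|c(x)\|_1$. Standing Assumption: there is an open convex set $\mathcal X$ containing all iterates; $f$ is $C^1$ and bounded below on $\mathcal X$ with $\nabla f$ bounded and $L$-Lipschitz on $\mathcal X$; $c$ and $\nabla c^T$ bounded on $\mathcal X$; each $\nabla c_i$ is $\gamma_i$-Lipschitz on $\mathcal X$; singular values of $\nabla c(x)^T$ bounded away from zero uniformly over $\mathcal X$. $\Gamma:=\sum_i\gamma_i$. Matrix Assumption: deterministic symmetric $H_k$ with $\|H_k\|_2\le\kappa_H$ and $u^TH_ku\ge\zeta\|u\|_2^2$ whenever $J_ku=0$. Algorithm 3 (inputs $x_0$, $\bar\tau_{-1}>0$, $\epsilon,\sigma\in(0,1)$, $\bar\xi_{-1}>0$, $\{\beta_k\}\subset(0,1]$,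 $\theta\ge0$): at iteration $k$, obtain stochastic gradient $\bar g_k$; $(\bar d_k,\bar y_k)$ solves $H_k\bar d_k+J_k^T\bar y_k=-\bar g_k$, $J_k\bar d_k=-c_k$ (assumed $\bar d_k\neq0$). $\bar\tau_k^{trial}=\infty$ if $\bar g_k^T\bar d_k+\max\{\bar d_k^TH_k\bar d_k,0\}\le0$, else $\frac{(1-\sigma)\|c_k\|_1}{\bar g_k^T\bar d_k+\max\{\bar d_k^TH_k\bar d_k,0\}}$; $\bar\tau_k=\bar\tau_{k-1}$ if $\bar\tau_{k-1}\le\bar\tau_k^{trial}$, else $(1-\epsilon)\bar\tau_k^{trial}$. $\bar\xi_k^{trial}=\frac{\Delta q(x_k,\bar\tau_k,\bar g_k,H_k,\bar d_k)}{\bar\tau_k\|\bar d_k\|_2^2}$; $\bar\xi_k=\bar\xi_{k-1}$ if $\bar\xi_{k-1}\le\bar\xi_k^{trial}$, else $(1-\epsilon)\bar\xi_k^{trial}$. With $D_k=(\bar\tau_kL+\Gamma)\|\bar d_k\|_2^2$, $\hat a_k=\beta_k\Delta q(x_k,\bar\tau_k,\bar g_k,H_k,\bar d_k)/D_k$, $\tilde a_k=\hat a_k-4\|c_k\|_1/D_k$, project both onto $[a_k,a_k+\theta\beta_k^2]$ with $a_k=\frac{\beta_k\bar\xi_k\bar\tau_k}{\bar\tau_kL+\Gamma}$ to get $\widehat\alpha_k,\widetilde\alpha_k$; $\bar\alpha_k=\widehat\alpha_k$ if $\widehat\alpha_k<1$, $1$ if $\widetilde\alpha_k\le1\le\widehat\alpha_k$,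 $\widetilde\alpha_k$ if $\widetilde\alpha_k>1$; $x_{k+1}=x_k+\bar\alpha_k\bar d_k$. Decomposition: $\bar d_k=\bar u_k+v_k$ with $\bar u_k\in\mathrm{Null}(J_k)$, $v_k\in\mathrm{Range}(J_k^T)$. *)

theory Defs
  imports "HOL-Analysis.Analysis"
begin

definition l1norm :: "real^'m \<Rightarrow> real" where
  "l1norm v = (\<Sum>i\<in>UNIV. \<bar>v $ i\<bar>)"

definition Delta_q :: "(real^'n \<Rightarrow> real^'m) \<Rightarrow> real^'n \<Rightarrow> real \<Rightarrow> real^'n \<Rightarrow> real^'n^'n \<Rightarrow> real^'n \<Rightarrow> real" where
  "Delta_q c x tau g H d = - tau * (g \<bullet> d + 1/2 * max (d \<bullet> (H *v d)) 0) + l1norm (c x)"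

definition merit_update :: "real \<Rightarrow> real \<Rightarrow> real \<Rightarrow> real" where
  "merit_update eps prev trial = (if prev \<le> trial then prev else (1 - eps) * trial)"

text \<open>Merit parameter update of Algorithm 3. When the denominator is <= 0 the trial value is
  +infinity, so prev <= trial holds and the previous value is kept.\<close>
definition tau_next :: "real \<Rightarrow> real \<Rightarrow> real \<Rightarrow> real \<Rightarrow> real^'n \<Rightarrow> real^'n^'n \<Rightarrow> real^'n \<Rightarrow> real" where
  "tau_next eps sig prev cn1 g H d =
     (let den = g \<bullet> d + max (d \<bullet> (H *v d)) 0
      in if den \<le> 0 then prev else merit_update eps prev ((1 - sig) * cn1 / den))"

definition proj_interval :: "real \<Rightarrow> real \<Rightarrow> real \<Rightarrow> real" where
  "proj_interval lo hi t = min (max t lo) hi"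

text \<open>Step size of Algorithm 3. Arguments: L, Gamma, theta, beta_k, xi_k, tau_k,
  Delta_k = Delta q(x_k,tau_k,gbar_k,H_k,d_k), ||c_k||_1, d_k.\<close>
definition alpha_bar :: "real \<Rightarrow> real \<Rightarrow> real \<Rightarrow> real \<Rightarrow> real \<Rightarrow> real \<Rightarrow> real \<Rightarrow> real \<Rightarrow> real^'n \<Rightarrow> real" where
  "alpha_bar L Gam theta beta xi tau Dq cn1 d =
     (let D = (tau * L + Gam) * (norm d)^2;
          ahat = beta * Dq / D;
          atil = ahat - 4 * cn1 / D;
          a = beta * xi * tau / (tau * L + Gam);
          alh = proj_interval a (a + theta * beta^2) ahat;
          alt = proj_interval a (a + theta * beta^2) atil
      in if alh < 1 then alh else if alt \<le> 1 then 1 else alt)"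

end

theory Submission
  imports Defs
begin

text \<open>Write \<open>d\<^sub>k = u\<^sub>k + v\<^sub>k\<close>. The uniform lower bound on the singular values of
  \<open>J\<^sub>k\<close> gives \<open>\<parallel>v\<^sub>k\<parallel> \<le> \<parallel>c\<^sub>k\<parallel> / s\<close>; testing the first block row of the linear system
  against \<open>u\<^sub>k\<close> and using the curvature of \<open>H\<^sub>k\<close> on the null space of \<open>J\<^sub>k\<close> then gives a
  uniform bound on \<open>u\<^sub>k\<close>. With both components bounded, the denominator of the trial merit
  parameter is at most a constant multiple of \<open>\<parallel>c\<^sub>k\<parallel>\<^sub>1\<close>, so the trial value is bounded
  away from zero. Hence \<open>\<tau>\<^sub>k\<close> stays above a positive constant, while each of its
  decreases is by a factor at most \<open>1 - \<epsilon>\<close>: it can decrease only finitely often.\<close>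

lemma norm_mult_lower_bound_on_range_transpose:
  fixes J :: "real^'n^'m"
  assumes sv: "\<And>w. s * norm w \<le> norm (transpose J *v w)"
    and v: "v \<in> range (\<lambda>w. transpose J *v w)"
  shows "s * norm v \<le> norm (J *v v)"
proof (cases "s > 0")
  case True
  obtain w where w: "v = transpose J *v w" using v by blast
  have "norm v ^ 2 = w \<bullet> (J *v v)"
    by (metis dot_lmul_matrix power2_norm_eq_inner transpose_matrix_vector w)
  also have "\<dots> \<le> norm w * norm (J *v v)"
    by (rule norm_cauchy_schwarz)
  finally have "s * norm v ^ 2 \<le> (s * norm w) * norm (J *v v)"
    using True by (simp add: mult_left_mono)
  also have "\<dots> \<le> norm v * norm (J *v v)"
    using sv[of w] w by (simp add: mult_right_mono)
  finally show ?thesis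
    by (cases "v = 0") (auto simp: power2_eq_square)
qed (simp add: mult_nonpos_nonneg order_trans[OF _ norm_ge_zero])

lemma inner_matrix_vector_symmetric:
  fixes H :: "real^'n^'n"
  assumes "transpose H = H"
  shows "a \<bullet> (H *v b) = b \<bullet> (H *v a)"
  by (metis assms dot_lmul_matrix inner_commute transpose_matrix_vector)

lemma inner_null_component_eq:
  fixes H :: "real^'n^'n" and J :: "real^'n^'m"
  assumes "H *v (u + v) + transpose J *v y = - g" and "J *v u = 0"
  shows "g \<bullet> u = - (u \<bullet> (H *v u)) - u \<bullet> (H *v v)"
proof -
  have "u \<bullet> (transpose J *v y) = 0"
    by (metis assms(2) dot_lmul_matrix inner_commute inner_zero_left transpose_matrix_vector)
  then have "u \<bullet> (H *v (u + v)) = - (u \<bullet> g)"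
    using arg_cong[OF assms(1), of "\<lambda>z. u \<bullet> z"] by (simp add: inner_add_right)
  then show ?thesis
    by (simp add: matrix_vector_right_distrib inner_add_right inner_commute)
qed

lemma null_component_bound:
  fixes H :: "real^'n^'n" and J :: "real^'n^'m"
  assumes sys: "H *v (u + v) + transpose J *v y = - g" and null: "J *v u = 0"
    and curv: "zeta * (norm u)\<^sup>2 \<le> u \<bullet> (H *v u)" and zeta: "zeta > 0"
    and H_bound: "\<And>w. norm (H *v w) \<le> kappa * norm w" and kappa: "kappa \<ge> 0"
  shows "zeta * norm u \<le> norm g + kappa * norm v"
proof -
  have "zeta * (norm u)\<^sup>2 \<le> - (g \<bullet> u) - u \<bullet> (H *v v)"
    using curv inner_null_component_eq[OF sys null] by simp
  also have "\<dots> \<le> norm g * norm u + norm u * (kappa * norm v)"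
    using Cauchy_Schwarz_ineq2[of g u] Cauchy_Schwarz_ineq2[of u "H *v v"]
      mult_left_mono[OF H_bound[of v] norm_ge_zero[of u]] by linarith
  finally have "norm u * (zeta * norm u) \<le> norm u * (norm g + kappa * norm v)"
    by (simp add: power2_eq_square algebra_simps)
  then show ?thesis
    using kappa by (cases "u = 0") auto
qed

lemma merit_denominator_bound:
  fixes H :: "real^'n^'n" and J :: "real^'n^'m"
  assumes sys: "H *v (u + v) + transpose J *v y = - g" and null: "J *v u = 0"
    and curv: "0 \<le> u \<bullet> (H *v u)" and sym: "transpose H = H"
    and H_bound: "\<And>w. norm (H *v w) \<le> kappa * norm w"
  shows "g \<bullet> (u + v) + max ((u + v) \<bullet> (H *v (u + v))) 0
           \<le> norm v * (kappa * norm u + kappa * norm v + norm g)"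
proof -
  define b where "b = u \<bullet> (H *v v)"
  define e where "e = v \<bullet> (H *v v)"
  have quad: "(u + v) \<bullet> (H *v (u + v)) = u \<bullet> (H *v u) + 2 * b + e"
    using inner_matrix_vector_symmetric[OF sym, of v u] unfolding b_def e_def
    by (simp add: matrix_vector_right_distrib inner_add_left inner_add_right)
  have lin: "g \<bullet> (u + v) = - (u \<bullet> (H *v u)) - b + g \<bullet> v"
    using inner_null_component_eq[OF sys null] unfolding b_def by (simp add: inner_add_right)
  have "\<bar>b\<bar> \<le> norm v * (kappa * norm u)"
    using Cauchy_Schwarz_ineq2[of u "H *v v"] mult_left_mono[OF H_bound[of v] norm_ge_zero[of u]]
    unfolding b_def by (simp add: algebra_simps)
  moreover have "\<bar>e\<bar> \<le> norm v * (kappa * norm v)"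
    using Cauchy_Schwarz_ineq2[of v "H *v v"] mult_left_mono[OF H_bound[of v] norm_ge_zero[of v]]
    unfolding e_def by (simp add: algebra_simps)
  moreover have "\<bar>g \<bullet> v\<bar> \<le> norm v * norm g"
    using Cauchy_Schwarz_ineq2[of g v] by (simp add: mult.commute)
  ultimately show ?thesis
    unfolding quad lin using curv by (simp add: max_def algebra_simps) linarith
qed

lemma search_direction_bounds:
  fixes H :: "real^'n^'n" and J :: "real^'n^'m"
  assumes sym: "transpose H = H"
    and H_bound: "\<And>w. norm (H *v w) \<le> kappa * norm w" and kappa: "0 \<le> kappa"
    and curv: "\<And>w. J *v w = 0 \<Longrightarrow> zeta * (norm w)\<^sup>2 \<le> w \<bullet> (H *v w)" and zeta: "0 < zeta"
    and sv: "\<And>w. s * norm w \<le> norm (transpose J *v w)" and s: "0 < s"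
    and sys: "H *v d + transpose J *v y = - g" "J *v d = - c"
    and decomp: "d = u + v" "J *v u = 0" "v \<in> range (\<lambda>w. transpose J *v w)"
    and g_le: "norm g \<le> G" and c_le: "norm c \<le> C"
  defines "V \<equiv> C / s" and "U \<equiv> (G + kappa * (C / s)) / zeta"
  shows "norm u \<le> U"
    and "g \<bullet> d + max (d \<bullet> (H *v d)) 0 \<le> (kappa * U + kappa * V + G) / s * l1norm c"
proof -
  have "J *v v = - c"
    using sys(2) decomp by (simp add: matrix_vector_right_distrib)
  then have "s * norm v \<le> norm c"
    using norm_mult_lower_bound_on_range_transpose[OF sv decomp(3)] by simp
  then have v_le: "norm v \<le> norm c / s" and "norm v \<le> V"
    using s c_le unfolding V_def by (simp_all add: pos_le_divide_eq mult.commute)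
  have "zeta * norm u \<le> norm g + kappa * norm v"
    using null_component_bound[OF _ decomp(2) curv[OF decomp(2)] zeta H_bound kappa] sys(1)
    unfolding decomp(1) by blast
  also have "\<dots> \<le> G + kappa * V"
    using g_le \<open>norm v \<le> V\<close> kappa by (simp add: add_mono mult_left_mono)
  finally show u_le: "norm u \<le> U"
    unfolding U_def V_def[symmetric] using zeta by (simp add: pos_le_divide_eq mult.commute)
  have curv_u: "0 \<le> u \<bullet> (H *v u)"
    using curv[OF decomp(2)] zeta by (smt (verit) zero_le_mult_iff zero_le_power2)
  have "g \<bullet> d + max (d \<bullet> (H *v d)) 0 \<le> norm v * (kappa * norm u + kappa * norm v + norm g)"
    using merit_denominator_bound[OF _ decomp(2) curv_u sym H_bound] sys(1)
    unfolding decomp(1) by blast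
  also have "\<dots> \<le> norm c / s * (kappa * U + kappa * V + G)"
    using u_le \<open>norm v \<le> V\<close> g_le v_le kappa s
    by (intro mult_mono add_mono mult_left_mono) auto
  also have "\<dots> \<le> l1norm c / s * (kappa * U + kappa * V + G)"
  proof (rule mult_right_mono)
    show "norm c / s \<le> l1norm c / s"
      using s norm_le_l1_cart[of c] unfolding l1norm_def by (simp add: divide_right_mono)
    show "0 \<le> kappa * U + kappa * V + G"
      using u_le \<open>norm v \<le> V\<close> g_le kappa by (smt (verit) norm_ge_zero mult_nonneg_nonneg)
  qed
  finally show "g \<bullet> d + max (d \<bullet> (H *v d)) 0 \<le> (kappa * U + kappa * V + G) / s * l1norm c"
    by (simp add: field_simps)
qed

lemma merit_update_cases:
  assumes eps: "0 < eps" "eps < 1" and trial: "T \<le> trial"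
  shows "merit_update eps prev trial = prev
    \<or> (1 - eps) * T \<le> merit_update eps prev trial \<and> merit_update eps prev trial \<le> (1 - eps) * prev"
  using eps mult_left_mono[OF trial, of "1 - eps"] mult_left_mono[of trial prev "1 - eps"]
  by (auto simp: merit_update_def)

lemma tau_next_cases:
  fixes H :: "real^'n^'n"
  assumes eps: "0 < eps" "eps < 1"
    and trial: "0 < g \<bullet> d + max (d \<bullet> (H *v d)) 0
                \<Longrightarrow> T \<le> (1 - sig) * cn / (g \<bullet> d + max (d \<bullet> (H *v d)) 0)"
  shows "tau_next eps sig prev cn g H d = prev
    \<or> (1 - eps) * T \<le> tau_next eps sig prev cn g H d \<and> tau_next eps sig prev cn g H d \<le> (1 - eps) * prev"
  using merit_update_cases[OF eps trial] by (auto simp: tau_next_def Let_def)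

lemma eventually_constant_if_decreases_by_factor:
  fixes t :: "nat \<Rightarrow> real"
  assumes eps: "0 < eps" "eps < 1" and pos: "0 < t 0" "0 < T"
    and update: "\<And>k. t (Suc k) = t k \<or> (1 - eps) * T \<le> t (Suc k) \<and> t (Suc k) \<le> (1 - eps) * t k"
  shows "\<exists>N. \<exists>tmin>0. \<forall>k\<ge>N. t k = tmin"
proof -
  define m where "m = min (t 0) ((1 - eps) * T)"
  have m_pos: "m > 0"
    unfolding m_def using pos eps by simp
  have lower: "m \<le> t k" for k
  proof (induction k)
    case (Suc k)
    then show ?case
      using update[of k] unfolding m_def by linarith
  qed (simp add: m_def)
  define l where "l = Inf (range t)"
  have bdd: "bdd_below (range t)"
    using lower by (intro bdd_belowI2) auto
  have "m \<le> l"
    unfolding l_def using lower by (auto intro: cInf_greatest)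
  then have "l < l / (1 - eps)"
    using m_pos eps by (simp add: less_divide_eq)
  then obtain N where N: "t N < l / (1 - eps)"
    unfolding l_def using bdd by (auto simp: cInf_less_iff)
  txt \<open>Once \<open>t N\<close> is within the factor \<open>1 - eps\<close> of the infimum, a further decrease
    would undershoot it.\<close>
  have "t k = t N" if "N \<le> k" for k
    using that
  proof (induction k rule: dec_induct)
    case (step k)
    have "l \<le> t (Suc k)"
      unfolding l_def using bdd by (simp add: cInf_lower)
    moreover have "(1 - eps) * t k < l"
      using N eps unfolding step.IH by (simp add: less_divide_eq mult.commute)
    ultimately show ?case
      using step.IH update[of k] by linarith
  qed simp
  moreover have "t N > 0"
    using lower[of N] m_pos by linarith
  ultimately show ?thesis
    by blast
qed

lemma merit_parameter_eventually_constant: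
  fixes tau cn :: "nat \<Rightarrow> real" and g d :: "nat \<Rightarrow> real^'n" and H :: "nat \<Rightarrow> real^'n^'n"
  assumes eps: "0 < eps" "eps < 1" and sig: "sig < 1" and tau_init: "0 < tau_init"
    and M: "0 \<le> M"
    and tau_rule: "\<forall>k. tau k = tau_next eps sig (if k = 0 then tau_init else tau (k - 1))
                              (cn k) (g k) (H k) (d k)"
    and den_bound: "\<And>k. g k \<bullet> d k + max (d k \<bullet> (H k *v d k)) 0 \<le> M * cn k"
  shows "\<exists>k_tau. \<exists>tau_min>0. \<forall>k\<ge>k_tau. tau k = tau_min"
proof -
  define T where "T = (1 - sig) / (M + 1)"
  have trial: "T \<le> (1 - sig) * cn k / den" if "0 < den" "den \<le> M * cn k" for k den
  proof -
    have "0 < cn k"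
      using that M by (smt (verit) mult_nonneg_nonpos)
    then have "(1 - sig) * den \<le> (1 - sig) * ((M + 1) * cn k)"
      using that sig by (intro mult_left_mono) (auto simp: distrib_right)
    then show ?thesis
      using that M unfolding T_def by (simp add: field_simps)
  qed
  define t where "t = case_nat tau_init tau"
  have "t (Suc k) = t k \<or> (1 - eps) * T \<le> t (Suc k) \<and> t (Suc k) \<le> (1 - eps) * t k" for k
  proof -
    have "t (Suc k) = tau_next eps sig (t k) (cn k) (g k) (H k) (d k)"
      using tau_rule unfolding t_def by (cases k) auto
    then show ?thesis
      using tau_next_cases[OF eps trial[OF _ den_bound]] by simp
  qed
  moreover have "0 < T"
    unfolding T_def using sig M by simp
  ultimately obtain N tau_min where "tau_min > 0" "\<forall>k\<ge>N. t k = tau_min"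
    using eventually_constant_if_decreases_by_factor[OF eps, of t T] tau_init
    unfolding t_def by auto
  then have "\<forall>k\<ge>N. tau k = tau_min"
    unfolding t_def by (metis le_SucI nat.case(2))
  then show ?thesis
    using \<open>tau_min > 0\<close> by blast
qed

theorem proposition3p17:
  fixes f :: "real^'n \<Rightarrow> real" and gradf :: "real^'n \<Rightarrow> real^'n"
    and c :: "real^'n \<Rightarrow> real^'m" and J :: "real^'n \<Rightarrow> real^'n^'m"
    and X :: "(real^'n) set"
    and L :: real and gamma :: "'m \<Rightarrow> real"
    and H :: "nat \<Rightarrow> real^'n^'n" and kappaH zeta :: real
    and x :: "nat \<Rightarrow> real^'n" and gbar :: "nat \<Rightarrow> real^'n"
    and d :: "nat \<Rightarrow> real^'n" and y :: "nat \<Rightarrow> real^'m"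
    and tau xi :: "nat \<Rightarrow> real" and tau_init xi_init eps sig theta gmax :: real
    and beta :: "nat \<Rightarrow> real"
    and u v :: "nat \<Rightarrow> real^'n"
  \<comment> \<open>Standing Assumption\<close>
  assumes X_open: "open X" and X_convex: "convex X"
    and iterates_in_X: "\<forall>k. x k \<in> X"
    and f_deriv: "\<forall>z\<in>X. (f has_derivative (\<lambda>h. gradf z \<bullet> h)) (at z)"
    and gradf_cont: "continuous_on X gradf"
    and f_bdd_below: "\<exists>flow. \<forall>z\<in>X. flow \<le> f z"
    and gradf_bdd: "bounded (gradf ` X)"
    and gradf_lip: "L-lipschitz_on X gradf"
    and c_deriv: "\<forall>z\<in>X. (c has_derivative (\<lambda>h. J z *v h)) (at z)"
    and c_bdd: "bounded (c ` X)"
    and J_bdd: "bounded (J ` X)"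
    and gradc_lip: "\<forall>i. (gamma i)-lipschitz_on X (\<lambda>z. J z $ i)"
    and sv_bdd: "\<exists>s>0. \<forall>z\<in>X. \<forall>w. s * norm w \<le> norm (transpose (J z) *v w)"
  \<comment> \<open>Matrix Assumption\<close>
    and H_sym: "\<forall>k. transpose (H k) = H k"
    and H_norm: "\<forall>k. onorm (\<lambda>w. H k *v w) \<le> kappaH"
    and zeta_pos: "zeta > 0"
    and H_curv: "\<forall>k w. J (x k) *v w = 0 \<longrightarrow> zeta * (norm w)^2 \<le> w \<bullet> (H k *v w)"
  \<comment> \<open>Algorithm 3 inputs\<close>
    and tau_init_pos: "tau_init > 0" and xi_init_pos: "xi_init > 0"
    and eps: "0 < eps" "eps < 1" and sig: "0 < sig" "sig < 1"
    and beta: "\<forall>k. 0 < beta k \<and> beta k \<le> 1"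
    and theta: "theta \<ge> 0"
  \<comment> \<open>Algorithm 3 iteration\<close>
    and lin_sys: "\<forall>k. H k *v d k + transpose (J (x k)) *v y k = - gbar k
                    \<and> J (x k) *v d k = - c (x k)"
    and d_nz: "\<forall>k. d k \<noteq> 0"
    and tau_rule: "\<forall>k. tau k = tau_next eps sig (if k = 0 then tau_init else tau (k - 1))
                              (l1norm (c (x k))) (gbar k) (H k) (d k)"
    and xi_rule: "\<forall>k. xi k = merit_update eps (if k = 0 then xi_init else xi (k - 1))
                              (Delta_q c (x k) (tau k) (gbar k) (H k) (d k) / (tau k * (norm (d k))^2))"
    and x_rule: "\<forall>k. x (Suc k) = x k + alpha_bar L (\<Sum>i\<in>UNIV. gamma i) theta (beta k) (xi k) (tau k)
                      (Delta_q c (x k) (tau k) (gbar k) (H k) (d k)) (l1norm (c (x k))) (d k) *\<^sub>R d k"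
  \<comment> \<open>Decomposition of d_k\<close>
    and decomp: "\<forall>k. d k = u k + v k \<and> J (x k) *v u k = 0
                   \<and> v k \<in> range (\<lambda>w. transpose (J (x k)) *v w)"
  \<comment> \<open>Bounded noise\<close>
    and gmax_pos: "gmax > 0"
    and noise: "\<forall>k. norm (gbar k - gradf (x k)) \<le> gmax"
  shows "bounded (range u) \<and>
         (\<exists>k_tau. \<exists>tau_min>0. \<forall>k\<ge>k_tau. tau k = tau_min)"
proof -
  have kappa: "0 \<le> kappaH"
    using onorm_pos_le[of "\<lambda>w. H 0 *v w"] H_norm by (simp add: order_trans)
  have H_bound: "norm (H k *v w) \<le> kappaH * norm w" for k w
    using onorm[of "\<lambda>w. H k *v w" w] H_norm mult_right_mono[of _ kappaH "norm w"]
    by (simp add: order_trans)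
  obtain s where s: "0 < s" "\<And>k w. s * norm w \<le> norm (transpose (J (x k)) *v w)"
    using sv_bdd iterates_in_X by blast
  obtain B where B: "0 < B" "\<forall>z\<in>X. norm (gradf z) \<le> B"
    using gradf_bdd by (auto simp: bounded_pos)
  have g_le: "norm (gbar k) \<le> B + gmax" for k
    using noise iterates_in_X B norm_triangle_sub[of "gbar k" "gradf (x k)"] by (smt (verit))
  obtain C where C: "0 < C" "\<And>k. norm (c (x k)) \<le> C"
    using c_bdd iterates_in_X by (auto simp: bounded_pos)
  define U where "U = (B + gmax + kappaH * (C / s)) / zeta"
  define M where "M = (kappaH * U + kappaH * (C / s) + (B + gmax)) / s"
  have u_le: "norm (u k) \<le> U"
    and den_le: "gbar k \<bullet> d k + max (d k \<bullet> (H k *v d k)) 0 \<le> M * l1norm (c (x k))" for k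
    using search_direction_bounds[OF H_sym[rule_format] H_bound kappa _ zeta_pos s(2) s(1)
        lin_sys[rule_format, THEN conjunct1] lin_sys[rule_format, THEN conjunct2]
        _ _ _ g_le C(2)] H_curv decomp
    unfolding U_def M_def by blast+
  have "0 \<le> M"
    unfolding M_def U_def using kappa zeta_pos s(1) C(1) B(1) gmax_pos by simp
  then show ?thesis
    using u_le merit_parameter_eventually_constant[OF eps sig(2) tau_init_pos _ tau_rule den_le]
    by (auto simp: bounded_iff)
qed

end
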